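(* Let $k\geq 2$ be an integer and let $P$ be a finite poset of width $w$ that does not contain $\mathbf{k}+\mathbf{k}$ as an induced subposet. Then the incomparability graph $G$ of $P$ has pathwidth at most $(2k-3)w-1$.
   Context: The width of a poset is the maximum size of an antichain. $\mathbf{k}+\mathbf{k}$ denotes the poset consisting of two disjoint chains $A,B$ with $|A|=|B|=k$ in which every element of $A$ is incomparable with every element of $B$; "$P$ does not contain $\mathbf{k}+\mathbf{k}$" means $P$ has no induced subposet isomorphic to it. The incomparability graph of $P$ has the elements of $P$ as vertices, two distinct vertices being adjacent iff they are incomparable in $P$. A path decomposition of a graph $G$ is a sequence $B_1,\dots,B_m$ of vertex subsets such that each vertex lies in a nonempty set of consecutive $B_i$'s and each edge has both endpoints in some $B_i$; its width is $\max_i |B_i|-1$, and the pathwidth of $G$ is the minimum width of a path decomposition of $G$. *)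

theory Defs
  imports Main
begin

definition partial_order_on' :: "'a set \<Rightarrow> ('a \<Rightarrow> 'a \<Rightarrow> bool) \<Rightarrow> bool" where
  "partial_order_on' V le \<longleftrightarrow>
     (\<forall>x\<in>V. le x x) \<and>
     (\<forall>x\<in>V. \<forall>y\<in>V. le x y \<and> le y x \<longrightarrow> x = y) \<and>
     (\<forall>x\<in>V. \<forall>y\<in>V. \<forall>z\<in>V. le x y \<and> le y z \<longrightarrow> le x z)"

definition comparable :: "('a \<Rightarrow> 'a \<Rightarrow> bool) \<Rightarrow> 'a \<Rightarrow> 'a \<Rightarrow> bool" where
  "comparable le x y \<longleftrightarrow> le x y \<or> le y x"

definition is_chain :: "('a \<Rightarrow> 'a \<Rightarrow> bool) \<Rightarrow> 'a set \<Rightarrow> bool" where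
  "is_chain le C \<longleftrightarrow> (\<forall>x\<in>C. \<forall>y\<in>C. comparable le x y)"

definition is_antichain :: "('a \<Rightarrow> 'a \<Rightarrow> bool) \<Rightarrow> 'a set \<Rightarrow> bool" where
  "is_antichain le A \<longleftrightarrow> (\<forall>x\<in>A. \<forall>y\<in>A. x \<noteq> y \<longrightarrow> \<not> comparable le x y)"

definition width :: "'a set \<Rightarrow> ('a \<Rightarrow> 'a \<Rightarrow> bool) \<Rightarrow> nat" where
  "width V le = Max {card A | A. A \<subseteq> V \<and> is_antichain le A}"

definition contains_kk :: "'a set \<Rightarrow> ('a \<Rightarrow> 'a \<Rightarrow> bool) \<Rightarrow> nat \<Rightarrow> bool" where
  "contains_kk V le k \<longleftrightarrow>
     (\<exists>A B. A \<subseteq> V \<and> B \<subseteq> V \<and> card A = k \<and> card B = k \<and> A \<inter> B = {} \<and>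
            is_chain le A \<and> is_chain le B \<and>
            (\<forall>a\<in>A. \<forall>b\<in>B. \<not> comparable le a b))"

definition incomp_edge :: "'a set \<Rightarrow> ('a \<Rightarrow> 'a \<Rightarrow> bool) \<Rightarrow> 'a \<Rightarrow> 'a \<Rightarrow> bool" where
  "incomp_edge V le x y \<longleftrightarrow> x \<in> V \<and> y \<in> V \<and> x \<noteq> y \<and> \<not> comparable le x y"

text \<open>Path decomposition of a graph (V,E): nonempty sequence of bags (list index i = B_(i+1)).\<close>
definition is_path_decomposition ::
  "'a set \<Rightarrow> ('a \<Rightarrow> 'a \<Rightarrow> bool) \<Rightarrow> 'a set list \<Rightarrow> bool" where
  "is_path_decomposition V E Bs \<longleftrightarrow>
     Bs \<noteq> [] \<and>
     (\<forall>i<length Bs. Bs ! i \<subseteq> V) \<and>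
     (\<forall>v\<in>V. \<exists>i<length Bs. v \<in> Bs ! i) \<and>
     (\<forall>v\<in>V. \<forall>i j l. i \<le> j \<and> j \<le> l \<and> l < length Bs \<and> v \<in> Bs ! i \<and> v \<in> Bs ! l
                   \<longrightarrow> v \<in> Bs ! j) \<and>
     (\<forall>x\<in>V. \<forall>y\<in>V. E x y \<longrightarrow> (\<exists>i<length Bs. x \<in> Bs ! i \<and> y \<in> Bs ! i))"

definition pd_width :: "'a set list \<Rightarrow> int" where
  "pd_width Bs = Max {int (card B) - 1 | B. B \<in> set Bs}"

definition pathwidth :: "'a set \<Rightarrow> ('a \<Rightarrow> 'a \<Rightarrow> bool) \<Rightarrow> int" where
  "pathwidth V E = Min {pd_width Bs | Bs. is_path_decomposition V E Bs}"

end

(*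
  Rank the elements by a function that is strictly monotone along the order and
  monotone in the number of bottoms of k-element chains with the given top.  Giving each element x
  the interval from its rank to the largest rank of an element incomparable to x represents the
  incomparability graph as an interval graph, so the intervals through each point form the bags
  of a path decomposition.

  A bag cannot contain a chain y_0 < ... < y_{2k-3}: the bag also contains an element z of rank
  at least that of y_{2k-3} which is incomparable to y_0, hence to the whole chain.  Now y_0 is the
  bottom of a k-chain with top y_{2k-3} but not of one with top z, so by the rank condition some k-chain
  u < ... < z starts at a u that is not such a bottom.  That chain is incomparable to y_0, ..., y_{k-1}:
  one direction would put some y_i below z, the other would put u below y_{k-1} and make it
  the bottom of the k-chain u < y_{k-1} < ... < y_{2k-3} after all.
  Hence bags have height at most 2k - 3, and by Mirsky's theorem at most (2k - 3) w elements.
*)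

theory Submission
  imports Defs
begin

section \<open>Path decompositions from interval representations\<close>

definition interval_bag :: "'a set \<Rightarrow> ('a \<Rightarrow> 'a \<Rightarrow> bool) \<Rightarrow> ('a \<Rightarrow> nat) \<Rightarrow> nat \<Rightarrow> 'a set" where
  "interval_bag V E pos p = {x\<in>V. pos x \<le> p \<and> (\<exists>y\<in>V. p \<le> pos y \<and> (x = y \<or> E x y))}"

lemma path_decomposition_interval_bags:
  assumes sym: "\<And>x y. x \<in> V \<Longrightarrow> y \<in> V \<Longrightarrow> E x y \<Longrightarrow> E y x"
    and pos_bound: "\<And>x. x \<in> V \<Longrightarrow> pos x < M" and "0 < M"
  shows "is_path_decomposition V E (map (interval_bag V E pos) [0..<M])"
proof -
  let ?bag = "interval_bag V E pos"
  have own: "x \<in> ?bag (pos x)" if "x \<in> V" for x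
    using that unfolding interval_bag_def by auto
  have convex: "x \<in> ?bag j" if early: "x \<in> ?bag i" and late: "x \<in> ?bag l" and "i \<le> j" "j \<le> l"
    for x i j l
  proof -
    obtain y where "y \<in> V" "l \<le> pos y" "x = y \<or> E x y"
      using late unfolding interval_bag_def by blast
    moreover have "x \<in> V" "pos x \<le> j" using early \<open>i \<le> j\<close> unfolding interval_bag_def by auto
    ultimately show ?thesis using \<open>j \<le> l\<close> unfolding interval_bag_def by force
  qed
  have edge: "x \<in> ?bag (max (pos x) (pos y)) \<and> y \<in> ?bag (max (pos x) (pos y))"
    if "x \<in> V" "y \<in> V" "E x y" for x y
    using that sym[OF that] unfolding interval_bag_def max_def by auto
  show ?thesis
    unfolding is_path_decomposition_def
  proof (intro conjI ballI allI impI)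
    fix x assume "x \<in> V"
    then show "\<exists>i<length (map ?bag [0..<M]). x \<in> map ?bag [0..<M] ! i"
      using own pos_bound by (intro exI[of _ "pos x"]) simp
  next
    fix x i j l assume "i \<le> j \<and> j \<le> l \<and> l < length (map ?bag [0..<M]) \<and>
      x \<in> map ?bag [0..<M] ! i \<and> x \<in> map ?bag [0..<M] ! l"
    then show "x \<in> map ?bag [0..<M] ! j" by (auto intro: convex)
  next
    fix x y assume "x \<in> V" "y \<in> V" "E x y"
    then show "\<exists>i<length (map ?bag [0..<M]). x \<in> map ?bag [0..<M] ! i \<and> y \<in> map ?bag [0..<M] ! i"
      using edge pos_bound by (intro exI[of _ "max (pos x) (pos y)"]) auto
  qed (use \<open>0 < M\<close> in \<open>auto simp: interval_bag_def\<close>)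
qed

lemma pd_width_le:
  assumes "Bs \<noteq> []" and "\<And>B. B \<in> set Bs \<Longrightarrow> card B \<le> n"
  shows "pd_width Bs \<le> int n - 1"
proof -
  have "pd_width Bs = Max ((\<lambda>B. int (card B) - 1) ` set Bs)"
    unfolding pd_width_def by (simp add: Setcompr_eq_image)
  also have "\<dots> \<le> int n - 1"
    using assms by (subst Max_le_iff) fastforce+
  finally show ?thesis .
qed

lemma pathwidth_le_pd_width:
  assumes "finite V" and "is_path_decomposition V E Bs"
  shows "pathwidth V E \<le> pd_width Bs"
proof -
  have "pd_width Cs \<in> {-1..int (card V)}" if "is_path_decomposition V E Cs" for Cs
  proof -
    have ne: "(\<lambda>B. int (card B) - 1) ` set Cs \<noteq> {}"
      using that unfolding is_path_decomposition_def by simp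
    have "pd_width Cs \<in> (\<lambda>B. int (card B) - 1) ` set Cs"
      unfolding pd_width_def Setcompr_eq_image by (rule Max_in) (use ne in auto)
    then obtain B where "B \<in> set Cs" "pd_width Cs = int (card B) - 1" by auto
    moreover have "B \<subseteq> V"
      using \<open>B \<in> set Cs\<close> that unfolding is_path_decomposition_def by (auto simp: in_set_conv_nth)
    ultimately show ?thesis using card_mono[OF \<open>finite V\<close>, of B] by simp
  qed
  then have "finite {pd_width Bs | Bs. is_path_decomposition V E Bs}"
    by (auto intro: finite_subset[of _ "{-1..int (card V)}"])
  then show ?thesis unfolding pathwidth_def using assms(2) by (intro Min_le) auto
qed

lemma antichain_card_le_width:
  assumes "finite V" "A \<subseteq> V" "is_antichain le A"
  shows "card A \<le> width V le"
proof -
  have "{card A | A. A \<subseteq> V \<and> is_antichain le A} \<subseteq> card ` Pow V" by auto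
  then have "finite {card A | A. A \<subseteq> V \<and> is_antichain le A}"
    using assms(1) finite_subset by blast
  then show ?thesis unfolding width_def using assms by (intro Max_ge) auto
qed

locale finite_poset =
  fixes V :: "'a set" and le :: "'a \<Rightarrow> 'a \<Rightarrow> bool"
  assumes finite_V: "finite V" and partial_order: "partial_order_on' V le"
begin

abbreviation less :: "'a \<Rightarrow> 'a \<Rightarrow> bool" where
  "less x y \<equiv> le x y \<and> x \<noteq> y"

lemma refl: "x \<in> V \<Longrightarrow> le x x"
  using partial_order unfolding partial_order_on'_def by blast

lemma antisym: "x \<in> V \<Longrightarrow> y \<in> V \<Longrightarrow> le x y \<Longrightarrow> le y x \<Longrightarrow> x = y"
  using partial_order unfolding partial_order_on'_def by blast

lemma trans: "x \<in> V \<Longrightarrow> y \<in> V \<Longrightarrow> z \<in> V \<Longrightarrow> le x y \<Longrightarrow> le y z \<Longrightarrow> le x z"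
  using partial_order unfolding partial_order_on'_def by blast

lemma less_le_trans: "x \<in> V \<Longrightarrow> y \<in> V \<Longrightarrow> z \<in> V \<Longrightarrow> less x y \<Longrightarrow> le y z \<Longrightarrow> less x z"
  by (metis trans antisym)

definition strict_chain :: "'a list \<Rightarrow> bool" where
  "strict_chain xs \<longleftrightarrow> set xs \<subseteq> V \<and> sorted_wrt less xs"

lemma strict_chain_Cons:
  "strict_chain (x # xs) \<longleftrightarrow> x \<in> V \<and> (\<forall>y\<in>set xs. less x y) \<and> strict_chain xs"
  unfolding strict_chain_def by auto

lemma strict_chain_append:
  "strict_chain (xs @ ys) \<longleftrightarrow> strict_chain xs \<and> strict_chain ys \<and> (\<forall>x\<in>set xs. \<forall>y\<in>set ys. less x y)"
  unfolding strict_chain_def sorted_wrt_append by auto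

lemma strict_chain_Cons_Cons:
  assumes "strict_chain (y # ys)" and "x \<in> V" and "less x y"
  shows "strict_chain (x # y # ys)"
proof -
  have "less x z" if "z \<in> set ys" for z
    using assms that less_le_trans[of x y z] unfolding strict_chain_Cons strict_chain_def by auto
  then show ?thesis using assms unfolding strict_chain_Cons by auto
qed

lemma strict_chain_distinct: "strict_chain xs \<Longrightarrow> distinct xs"
  by (induction xs) (auto simp: strict_chain_Cons)

lemma card_set_strict_chain: "strict_chain xs \<Longrightarrow> card (set xs) = length xs"
  by (simp add: distinct_card strict_chain_distinct)

lemma is_chain_strict_chain: "strict_chain xs \<Longrightarrow> is_chain le (set xs)"
  by (induction xs) (auto simp: is_chain_def comparable_def strict_chain_Cons intro: refl)

text \<open>Mirsky's theorem: the minimal elements form an antichain, and removing them lowers the height.\<close>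

lemma card_le_height_mult_width:
  assumes "S \<subseteq> V"
    and antichain_bound: "\<And>A. A \<subseteq> S \<Longrightarrow> is_antichain le A \<Longrightarrow> card A \<le> w"
    and height: "\<And>xs. strict_chain xs \<Longrightarrow> set xs \<subseteq> S \<Longrightarrow> length xs \<le> h"
  shows "card S \<le> h * w"
  using assms
proof (induction h arbitrary: S)
  case 0
  have "S = {}"
  proof (rule ccontr)
    assume "S \<noteq> {}"
    then obtain x where "x \<in> S" by blast
    then have "strict_chain [x]" using "0.prems"(1) unfolding strict_chain_def by auto
    then show False using "0.prems"(3)[of "[x]"] \<open>x \<in> S\<close> by simp
  qed
  then show ?case by simp
next
  case (Suc h)
  define minimal where "minimal = {x\<in>S. \<forall>y\<in>S. le y x \<longrightarrow> y = x}"
  have fin: "finite S" using Suc.prems(1) finite_V finite_subset by blast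
  have "minimal \<subseteq> S" unfolding minimal_def by auto
  moreover have "is_antichain le minimal"
    unfolding is_antichain_def comparable_def minimal_def by auto
  ultimately have "card minimal \<le> w" using Suc.prems(2) by blast
  have "card (S - minimal) \<le> h * w"
  proof (rule Suc.IH)
    fix xs assume xs: "strict_chain xs" "set xs \<subseteq> S - minimal"
    show "length xs \<le> h"
    proof (cases xs)
      case (Cons x ys)
      then obtain y where "y \<in> S" "less y x" using xs(2) unfolding minimal_def by auto
      then have "strict_chain (y # xs)"
        using Cons xs(1) Suc.prems(1) strict_chain_Cons_Cons by auto
      then show ?thesis using Suc.prems(3)[of "y # xs"] xs(2) \<open>y \<in> S\<close> by auto
    qed simp
  qed (use Suc.prems in blast)+
  moreover have "card S = card minimal + card (S - minimal)"
    using card_Diff_subset[of minimal S] card_mono[of S minimal] fin \<open>minimal \<subseteq> S\<close>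
    by (simp add: finite_subset)
  ultimately show ?case using \<open>card minimal \<le> w\<close> by simp
qed

lemma strict_chain_le_last: "strict_chain xs \<Longrightarrow> y \<in> set xs \<Longrightarrow> le y (last xs)"
  by (induction xs) (auto simp: strict_chain_Cons intro: refl)

lemma strict_chain_hd_le: "strict_chain xs \<Longrightarrow> y \<in> set xs \<Longrightarrow> le (hd xs) y"
  by (cases xs) (auto simp: strict_chain_Cons intro: refl)

definition chain_below :: "nat \<Rightarrow> 'a \<Rightarrow> 'a set" where
  "chain_below m x = {u. \<exists>ys. length ys = m \<and> strict_chain (u # ys @ [x])}"

lemma chain_below_subset: "chain_below m x \<subseteq> V"
  unfolding chain_below_def strict_chain_def by auto

lemma finite_chain_below: "finite (chain_below m x)"
  using chain_below_subset finite_V finite_subset by blast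

lemma less_of_mem_chain_below: "u \<in> chain_below m x \<Longrightarrow> less u x"
  unfolding chain_below_def strict_chain_Cons by auto

lemma mem_chain_below_of_strict_chain:
  assumes "strict_chain (u # xs)" and "xs \<noteq> []"
  shows "u \<in> chain_below (length xs - 1) (last xs)"
proof -
  have "xs = butlast xs @ [last xs]" using \<open>xs \<noteq> []\<close> by simp
  then show ?thesis unfolding chain_below_def using assms by (intro CollectI exI[of _ "butlast xs"]) auto
qed

lemma chain_below_mono:
  assumes "x \<in> V" "y \<in> V" "less x y"
  shows "chain_below m x \<subseteq> chain_below m y"
proof
  fix u assume "u \<in> chain_below m x"
  then obtain ys where ys: "length ys = m" "strict_chain ((u # ys) @ [x])"
    unfolding chain_below_def by auto
  then have chain: "strict_chain (u # ys)" "\<forall>v\<in>set (u # ys). less v x"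
    unfolding strict_chain_append by auto
  have "less v y" if "v \<in> set (u # ys)" for v
  proof (rule less_le_trans[of v x y])
    show "v \<in> V" using chain(1) that unfolding strict_chain_def by auto
    show "less v x" using chain(2) that by blast
  qed (use assms in auto)
  then have "strict_chain ((u # ys) @ [y])"
    using chain(1) \<open>y \<in> V\<close> unfolding strict_chain_append by (auto simp: strict_chain_def)
  then show "u \<in> chain_below m y" unfolding chain_below_def using ys(1) by auto
qed

text \<open>Both cardinalities are at most
  \<open>card V\<close>, so \<open>chain_rank m\<close> compares first \<open>card (chain_below m x)\<close>, then \<open>card (chain_below 0 x)\<close>.\<close>

definition chain_rank :: "nat \<Rightarrow> 'a \<Rightarrow> nat" where
  "chain_rank m x = card (chain_below m x) * Suc (card V) + card (chain_below 0 x)"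

lemma card_chain_below_less: "card (chain_below m x) < Suc (card V)"
  using le_imp_less_Suc[OF card_mono[OF finite_V chain_below_subset]] .

lemma chain_rank_less:
  assumes "x \<in> V" "y \<in> V" "less x y"
  shows "chain_rank m x < chain_rank m y"
proof -
  have "card (chain_below m x) \<le> card (chain_below m y)"
    by (rule card_mono[OF finite_chain_below chain_below_mono[OF assms]])
  moreover have "chain_below 0 x \<subset> chain_below 0 y"
  proof
    show "chain_below 0 x \<subseteq> chain_below 0 y" by (rule chain_below_mono[OF assms])
    have "x \<in> chain_below 0 y"
      using assms unfolding chain_below_def strict_chain_def by auto
    moreover have "x \<notin> chain_below 0 x" using less_of_mem_chain_below by blast
    ultimately show "chain_below 0 x \<noteq> chain_below 0 y" by blast
  qed
  then have "card (chain_below 0 x) < card (chain_below 0 y)"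
    by (rule psubset_card_mono[OF finite_chain_below])
  ultimately show ?thesis unfolding chain_rank_def by (intro add_le_less_mono mult_le_mono1)
qed

lemma card_chain_below_le_of_chain_rank_le:
  assumes "chain_rank m x \<le> chain_rank m y"
  shows "card (chain_below m x) \<le> card (chain_below m y)"
proof (rule ccontr)
  assume "\<not> ?thesis"
  then have "Suc (card (chain_below m y)) * Suc (card V) \<le> card (chain_below m x) * Suc (card V)"
    by (intro mult_le_mono1) simp
  then show False
    using assms card_chain_below_less[of 0 y] unfolding chain_rank_def by simp
qed

section \<open>Long chains in a bag produce a copy of \<open>k + k\<close>\<close>

lemma contains_kk_of_chain_below_diff:
  assumes chain: "strict_chain (ls @ m # hs)"
    and lengths: "length ls = Suc j" "length hs = j"
    and "z \<in> V" and incomparable: "\<And>y. y \<in> set (ls @ m # hs) \<Longrightarrow> \<not> comparable le y z"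
    and u_below_z: "u \<in> chain_below j z" and u_not_below: "u \<notin> chain_below j (last (m # hs))"
  shows "contains_kk V le (j + 2)"
proof -
  obtain gs where gs: "length gs = j" "strict_chain (u # gs @ [z])"
    using u_below_z unfolding chain_below_def by blast
  have lower: "strict_chain (ls @ [m])"
    using chain strict_chain_append[of "ls @ [m]" hs] by simp
  have upper: "strict_chain (m # hs)"
    using chain strict_chain_append[of ls "m # hs"] by simp
  have incomparable_AB: "\<not> comparable le a b" if a: "a \<in> set (u # gs @ [z])" and b: "b \<in> set (ls @ [m])"
    for a b
  proof
    have V: "a \<in> V" "b \<in> V" "u \<in> V" "m \<in> V"
      using a b gs(2) lower unfolding strict_chain_def by auto
    have "le u a" using strict_chain_hd_le[OF gs(2) a] by simp
    have "le a z" using strict_chain_le_last[OF gs(2) a] by simp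
    have "le b m" using strict_chain_le_last[OF lower b] by simp
    have b_chain: "b \<in> set (ls @ m # hs)" using b by auto
    assume "comparable le a b"
    then consider "le a b" | "le b a" unfolding comparable_def by blast
    then show False
    proof cases
      case 1
      then have "le u m" using trans V \<open>le u a\<close> \<open>le b m\<close> by meson
      moreover have "u \<noteq> m"
        using incomparable[of m] trans[OF V(3) V(1) \<open>z \<in> V\<close> \<open>le u a\<close> \<open>le a z\<close>]
        unfolding comparable_def by auto
      ultimately have "strict_chain (u # m # hs)" using strict_chain_Cons_Cons[OF upper V(3)] by simp
      then show False using u_not_below mem_chain_below_of_strict_chain[of u "m # hs"] lengths by simp
    next
      case 2
      then have "le b z" using trans V \<open>z \<in> V\<close> \<open>le a z\<close> by meson
      then show False using incomparable[OF b_chain] unfolding comparable_def by simp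
    qed
  qed
  show ?thesis
    unfolding contains_kk_def
  proof (intro exI conjI)
    show "set (u # gs @ [z]) \<subseteq> V" "set (ls @ [m]) \<subseteq> V"
      using gs(2) lower unfolding strict_chain_def by auto
    show "card (set (u # gs @ [z])) = j + 2" "card (set (ls @ [m])) = j + 2"
      using card_set_strict_chain[OF gs(2)] card_set_strict_chain[OF lower] gs(1) lengths by auto
    show "is_chain le (set (u # gs @ [z]))" "is_chain le (set (ls @ [m]))"
      using is_chain_strict_chain gs(2) lower by blast+
    show "\<forall>a\<in>set (u # gs @ [z]). \<forall>b\<in>set (ls @ [m]). \<not> comparable le a b"
      using incomparable_AB by blast
    show "set (u # gs @ [z]) \<inter> set (ls @ [m]) = {}"
      using incomparable_AB refl \<open>set (ls @ [m]) \<subseteq> V\<close> unfolding comparable_def by blast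
  qed
qed

lemma strict_chain_split:
  assumes "strict_chain xs" and "2 * j + 2 \<le> length xs"
  obtains ls m hs where "strict_chain (ls @ m # hs)" "set (ls @ m # hs) \<subseteq> set xs"
    "length ls = Suc j" "length hs = j"
proof -
  let ?ys = "take (2 * j + 2) xs"
  have ys: "strict_chain ?ys" "set ?ys \<subseteq> set xs" "length ?ys = Suc j + Suc j"
    using assms unfolding strict_chain_def by (auto dest: in_set_takeD)
  have "length (drop (Suc j) ?ys) = Suc j" using ys(3) by simp
  then obtain m hs where "drop (Suc j) ?ys = m # hs" "length hs = j"
    by (metis length_Suc_conv)
  moreover have "length (take (Suc j) ?ys) = Suc j" using ys(3) by simp
  ultimately show ?thesis using that ys(1,2) append_take_drop_id[of "Suc j" ?ys] by metis
qed

lemma interval_bag_chain_incomparable: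
  assumes chain: "strict_chain (y0 # ys)" and "ys \<noteq> []"
    and in_bag: "set (y0 # ys) \<subseteq> interval_bag V (incomp_edge V le) (chain_rank j) p"
  obtains z where "z \<in> V" "chain_rank j (last ys) \<le> chain_rank j z"
    "\<And>y. y \<in> set (y0 # ys) \<Longrightarrow> \<not> comparable le y z"
proof -
  let ?t = "last ys"
  have C_V: "set (y0 # ys) \<subseteq> V" using chain unfolding strict_chain_def by blast
  have "?t \<in> set ys" using \<open>ys \<noteq> []\<close> by simp
  have rank_le_t: "chain_rank j y \<le> chain_rank j ?t" if "y \<in> set (y0 # ys)" for y
  proof -
    have "le y ?t" using strict_chain_le_last[OF chain that] \<open>ys \<noteq> []\<close> by simp
    moreover have "y \<in> V" "?t \<in> V" using C_V that \<open>?t \<in> set ys\<close> by auto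
    ultimately show ?thesis using chain_rank_less[of y ?t j] by (cases "y = ?t") auto
  qed
  have "chain_rank j ?t \<le> p" using in_bag \<open>?t \<in> set ys\<close> unfolding interval_bag_def by auto
  moreover obtain z where z: "z \<in> V" "p \<le> chain_rank j z" "y0 = z \<or> incomp_edge V le y0 z"
    using in_bag unfolding interval_bag_def by auto
  ultimately have t_z: "chain_rank j ?t \<le> chain_rank j z" by simp
  have "less y0 ?t" using chain \<open>?t \<in> set ys\<close> unfolding strict_chain_Cons by blast
  then have "chain_rank j y0 < chain_rank j z"
    using chain_rank_less[of y0 ?t j] C_V \<open>?t \<in> set ys\<close> t_z by auto
  then have y0_z: "\<not> comparable le y0 z" using z(3) unfolding incomp_edge_def by auto
  have "\<not> comparable le y z" if "y \<in> set (y0 # ys)" for y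
  proof
    have "y \<in> V" "y0 \<in> V" using C_V that by auto
    have "le y0 y" using strict_chain_hd_le[OF chain that] by simp
    assume "comparable le y z"
    then consider "le y z" | "less z y" unfolding comparable_def by blast
    then show False
    proof cases
      case 1
      then show False using y0_z trans[OF \<open>y0 \<in> V\<close> \<open>y \<in> V\<close> z(1) \<open>le y0 y\<close>]
        unfolding comparable_def by blast
    next
      case 2
      then show False
        using chain_rank_less[OF z(1) \<open>y \<in> V\<close>, of j] rank_le_t[OF that] t_z by simp
    qed
  qed
  with z(1) t_z that show ?thesis by blast
qed

lemma strict_chain_in_interval_bag_length:
  assumes no_kk: "\<not> contains_kk V le (j + 2)"
    and xs: "strict_chain xs" "set xs \<subseteq> interval_bag V (incomp_edge V le) (chain_rank j) p"
  shows "length xs \<le> 2 * j + 1"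
proof (rule ccontr)
  assume "\<not> ?thesis"
  then have "2 * j + 2 \<le> length xs" by simp
  then obtain ls m hs where chain: "strict_chain (ls @ m # hs)"
    and sub: "set (ls @ m # hs) \<subseteq> set xs" and lengths: "length ls = Suc j" "length hs = j"
    by (rule strict_chain_split[OF xs(1)])
  obtain y0 ls' where ls: "ls = y0 # ls'" using lengths by (cases ls) auto
  have chain': "strict_chain (y0 # ls' @ m # hs)" using chain unfolding ls by simp
  have in_bag: "set (y0 # ls' @ m # hs) \<subseteq> interval_bag V (incomp_edge V le) (chain_rank j) p"
    using sub xs(2) unfolding ls by (metis append_Cons subset_trans)
  let ?t = "last (m # hs)"
  obtain z where z: "z \<in> V" "chain_rank j (last (ls' @ m # hs)) \<le> chain_rank j z"
    and incomparable: "\<And>y. y \<in> set (y0 # ls' @ m # hs) \<Longrightarrow> \<not> comparable le y z"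
    using interval_bag_chain_incomparable[OF chain' _ in_bag] by blast
  have "strict_chain (y0 # m # hs)"
    using chain' by (auto simp: strict_chain_Cons strict_chain_append)
  then have y0_below: "y0 \<in> chain_below j ?t"
    using mem_chain_below_of_strict_chain[of y0 "m # hs"] lengths by simp
  have "\<not> chain_below j z \<subseteq> chain_below j ?t"
  proof
    assume "chain_below j z \<subseteq> chain_below j ?t"
    moreover have "y0 \<notin> chain_below j z"
      using less_of_mem_chain_below incomparable[of y0] unfolding comparable_def by auto
    ultimately have "chain_below j z \<subset> chain_below j ?t" using y0_below by blast
    then have "card (chain_below j z) < card (chain_below j ?t)"
      by (rule psubset_card_mono[OF finite_chain_below])
    then show False using card_chain_below_le_of_chain_rank_le[OF z(2)] by simp
  qed
  then obtain u where "u \<in> chain_below j z" "u \<notin> chain_below j ?t" by blast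
  then have "contains_kk V le (j + 2)"
    using contains_kk_of_chain_below_diff[OF chain lengths z(1)] incomparable unfolding ls by simp
  with no_kk show False ..
qed

end

theorem corollary2:
  fixes V :: "'a set" and le :: "'a \<Rightarrow> 'a \<Rightarrow> bool" and k :: nat
  assumes "k \<ge> 2"
    and "finite V"
    and "partial_order_on' V le"
    and "\<not> contains_kk V le k"
  shows "pathwidth V (incomp_edge V le) \<le> (2 * int k - 3) * int (width V le) - 1"
proof -
  interpret finite_poset V le using assms(2,3) by unfold_locales
  obtain j where k: "k = j + 2" using assms(1) by (metis add.commute le_Suc_ex)
  let ?bag = "interval_bag V (incomp_edge V le) (chain_rank j)"
  let ?M = "Suc (Max (chain_rank j ` V))"
  have pd: "is_path_decomposition V (incomp_edge V le) (map ?bag [0..<?M])"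
    by (rule path_decomposition_interval_bags)
      (auto simp: incomp_edge_def comparable_def finite_V le_imp_less_Suc)
  have "card (?bag p) \<le> (2 * j + 1) * width V le" for p
  proof (rule card_le_height_mult_width)
    show "?bag p \<subseteq> V" unfolding interval_bag_def by blast
    then show "card A \<le> width V le" if "A \<subseteq> ?bag p" "is_antichain le A" for A
      using antichain_card_le_width[OF finite_V] that by blast
    show "length xs \<le> 2 * j + 1" if "strict_chain xs" "set xs \<subseteq> ?bag p" for xs
      using strict_chain_in_interval_bag_length assms(4) that unfolding k by blast
  qed
  then have "pd_width (map ?bag [0..<?M]) \<le> int ((2 * j + 1) * width V le) - 1"
    by (intro pd_width_le) auto
  then show ?thesis
    using pathwidth_le_pd_width[OF finite_V pd] unfolding k by (simp add: algebra_simps)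
qed

end
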